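(* Let $n \ge 1$ and let $\varphi : \mathbb{R} \to \mathbb{R}$ be a continuous activation function that can be uniformly approximated by one-to-one functions. If a function $g : \mathbb{R}^n \to \mathbb{R}$ is approximated by the family $\mathcal{N}_{\varphi, n}$, then $g$ is approximated by the family $\mathcal{N}^*_n$ of non-singular functions.
   Context: $\mathcal{N}_{\varphi,n}$ is the family of functions $\mathbb{R}^n \to \mathbb{R}$ defined by layered feed-forward networks with activation $\varphi$, input dimension $n$, output dimension 1, any finite number of hidden layers, each of width at most $n$; such a network with layer widths $n_0=n, n_1,\dots,n_{\kappa-1}, n_\kappa=1$ computes $\nu_\kappa\circ\ell_\kappa\circ\cdots\circ\nu_0\circ\ell_0$, where the $\ell_i$ are the affine maps given by the weights between consecutive layers and each $\nu_i$ applies the activation coordinatewise. The family $\mathcal{N}^*_n$ of non-singular functions is the union, over all continuous one-to-one activation functions $\psi:\mathbb{R}\to\mathbb{R}$, of the functions computed by such networks with activation $\psi$ in which every hidden layer has width exactly $n$, every weight matrix between two consecutive width-$n$ layers (including input to first hidden layer) is nonsingular, and the weight vector from the last hidden layer to the output is nonzero. An activation $\varphi$ is uniformly approximated by one-to-one functions if some sequence of continuous one-to-one functions converges uniformly on $\mathbb{R}$ to $\varphi$. A family $M$ approximates $g$ if for every compact $A\subset\mathbb{R}^n$ and $\epsilon>0$ there is $f\in M$ with $|f(x)-g(x)|<\epsilon$ for all $x\in A$. *)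

theory Defs
  imports "HOL-Analysis.Analysis"
begin

text \<open>Input space R^n is real^'n, n = CARD('n).  A hidden layer of width m \<le> n is
  represented by a nonempty set T of neuron labels (a subset of 'n with card T = m),
  a weight matrix W and a bias vector b; only the rows indexed by T and the columns
  indexed by the previous layer's labels are used.\<close>

type_synonym 'n layer = "'n set \<times> (real^'n^'n) \<times> (real^'n)"

fun hid_eval :: "(real \<Rightarrow> real) \<Rightarrow> 'n::finite set \<Rightarrow> 'n layer list \<Rightarrow> real^'n
                  \<Rightarrow> ('n set \<times> (real^'n))" where
  "hid_eval act S [] h = (S, h)"
| "hid_eval act S ((T, W, b) # Ls) h =
     hid_eval act T Ls (\<chi> i. act ((\<Sum>j\<in>S. W $ i $ j * h $ j) + b $ i))"

text \<open>Network: hidden layers Ls, then output weights w, output bias c; the activation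
  is applied after every affine map, including the output one
  (nu_kappa o l_kappa o ... o nu_0 o l_0).\<close>
definition net_eval :: "(real \<Rightarrow> real) \<Rightarrow> 'n::finite layer list \<Rightarrow> real^'n \<Rightarrow> real
                         \<Rightarrow> real^'n \<Rightarrow> real" where
  "net_eval act Ls w c x =
     (case hid_eval act UNIV Ls x of (S, h) \<Rightarrow> act ((\<Sum>j\<in>S. w $ j * h $ j) + c))"

definition N_fam :: "(real \<Rightarrow> real) \<Rightarrow> (real^'n::finite \<Rightarrow> real) set" where
  "N_fam act = {f. \<exists>Ls w c. (\<forall>(T, W, b) \<in> set Ls. T \<noteq> {}) \<and> f = net_eval act Ls w c}"

definition N_star :: "(real^'n::finite \<Rightarrow> real) set" where
  "N_star = {f. \<exists>psi Ls w c. continuous_on UNIV psi \<and> inj psi \<and>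
                 (\<forall>(T, W, b) \<in> set Ls. T = UNIV \<and> det W \<noteq> 0) \<and> w \<noteq> 0 \<and>
                 f = net_eval psi Ls w c}"

definition unif_approx_by_inj :: "(real \<Rightarrow> real) \<Rightarrow> bool" where
  "unif_approx_by_inj act \<longleftrightarrow> (\<exists>s :: nat \<Rightarrow> real \<Rightarrow> real.
      (\<forall>k. continuous_on UNIV (s k) \<and> inj (s k)) \<and> uniform_limit UNIV s act sequentially)"

definition approximates :: "('a::topological_space \<Rightarrow> real) set \<Rightarrow> ('a \<Rightarrow> real) \<Rightarrow> bool" where
  "approximates M g \<longleftrightarrow> (\<forall>A e. compact A \<and> e > 0 \<longrightarrow>
      (\<exists>f\<in>M. \<forall>x\<in>A. \<bar>f x - g x\<bar> < e))"

end

theory Submission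
  imports Defs
begin

(* A hidden layer of width m < n is a full-width layer whose weight columns outside the
   previous layer's neurons vanish, so every network of N_{phi,n} is a "dense" network with
   n x n weight matrices.  Replacing each weight matrix W by W + t I makes it nonsingular for
   all small t \<noteq> 0, because det (W + t I) is a polynomial in t that is nonzero for large t.
   Replacing moreover the output weights by nearby nonzero ones and phi by its one-to-one
   approximants psi_k yields networks of N*_n; as t \<rightarrow> 0 and k \<rightarrow> \<infinity> they converge to the
   given network uniformly on compact sets, because psi_k \<rightarrow> phi uniformly and phi is
   continuous. *)

lemma real_polynomial_function_finite_roots:
  fixes p :: "real \<Rightarrow> real"
  assumes "real_polynomial_function p" and "p a \<noteq> 0"
  shows "finite {x. p x = 0}"
proof -
  obtain c n where p: "p = (\<lambda>x. \<Sum>i\<le>n. c i * x ^ i)"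
    using assms(1) real_polynomial_function_iff_sum by blast
  then have "\<exists>k\<le>n. c k \<noteq> 0"
    using assms(2) polyfun_eq_0[of c n] by auto
  then show ?thesis
    unfolding p by (rule polyfun_rootbound_finite)
qed

lemma tendsto_uniform_limit_apply:
  fixes f :: "'i \<Rightarrow> 'a::t2_space \<Rightarrow> 'b::real_normed_vector"
  assumes "uniform_limit UNIV f g F" and "isCont g a" and "(x \<longlongrightarrow> a) F"
  shows "((\<lambda>k. f k (x k)) \<longlongrightarrow> g a) F"
proof -
  have "((\<lambda>k. f k (x k) - g (x k)) \<longlongrightarrow> 0) F"
  proof (rule tendstoI)
    fix e :: real assume "e > 0"
    from uniform_limitD[OF assms(1) this]
    show "\<forall>\<^sub>F k in F. dist (f k (x k) - g (x k)) 0 < e"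
      by (rule eventually_mono) (simp add: dist_norm)
  qed
  moreover have "((\<lambda>k. g (x k)) \<longlongrightarrow> g a) F"
    using assms(2,3) by (rule isCont_tendsto_compose)
  ultimately have "((\<lambda>k. (f k (x k) - g (x k)) + g (x k)) \<longlongrightarrow> 0 + g a) F"
    by (rule tendsto_add)
  then show ?thesis by simp
qed

lemma uniform_limit_compact_sequentially:
  fixes F :: "nat \<Rightarrow> 'a::metric_space \<Rightarrow> 'b::metric_space"
  assumes "compact A" and "continuous_on A G"
    and lim: "\<And>r xs x. strict_mono r \<Longrightarrow> (\<forall>k. xs k \<in> A) \<Longrightarrow> xs \<longlonglongrightarrow> x
      \<Longrightarrow> (\<lambda>k. F (r k) (xs k)) \<longlonglongrightarrow> G x"
  shows "uniform_limit A F G sequentially"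
proof (rule uniform_limitI, rule ccontr)
  fix e :: real
  assume "e > 0" and "\<not> (\<forall>\<^sub>F k in sequentially. \<forall>x\<in>A. dist (F k x) (G x) < e)"
  from not_eventually_sequentiallyD[OF this(2)]
  obtain r :: "nat \<Rightarrow> nat" where r: "strict_mono r" and "\<forall>k. \<not> (\<forall>x\<in>A. dist (F (r k) x) (G x) < e)"
    by blast
  then have "\<forall>k. \<exists>x. x \<in> A \<and> e \<le> dist (F (r k) x) (G x)"
    by (auto simp: not_less)
  from choice[OF this] obtain xs
    where xs: "\<forall>k. xs k \<in> A" and far: "\<And>k. e \<le> dist (F (r k) (xs k)) (G (xs k))"
    by blast
  obtain l and r' :: "nat \<Rightarrow> nat" where "l \<in> A" and r': "strict_mono r'" and "(xs \<circ> r') \<longlonglongrightarrow> l"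
    using \<open>compact A\<close> xs unfolding compact_def by meson
  have "(\<lambda>k. F (r (r' k)) (xs (r' k))) \<longlonglongrightarrow> G l"
    using lim[OF strict_mono_o[OF r r'], of "xs \<circ> r'"] xs \<open>(xs \<circ> r') \<longlonglongrightarrow> l\<close> by simp
  moreover have "(\<lambda>k. G (xs (r' k))) \<longlonglongrightarrow> G l"
    using assms(2) \<open>l \<in> A\<close> xs \<open>(xs \<circ> r') \<longlonglongrightarrow> l\<close>
    unfolding continuous_on_sequentially by (simp add: o_def)
  ultimately have "(\<lambda>k. dist (F (r (r' k)) (xs (r' k))) (G (xs (r' k)))) \<longlonglongrightarrow> dist (G l) (G l)"
    by (rule tendsto_dist)
  then have "\<forall>\<^sub>F k in sequentially. dist (F (r (r' k)) (xs (r' k))) (G (xs (r' k))) < e"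
    using \<open>e > 0\<close> by (simp add: order_tendstoD(2))
  then obtain k where "dist (F (r (r' k)) (xs (r' k))) (G (xs (r' k))) < e"
    unfolding eventually_sequentially by blast
  with far[of "r' k"] show False
    by simp
qed

lemma ex_nonzero_sequence_tendsto:
  fixes w :: "'a::{real_normed_vector, perfect_space}"
  shows "\<exists>ws. (\<forall>k. ws k \<noteq> 0) \<and> ws \<longlonglongrightarrow> w"
proof -
  have "insert 0 (- {0}) = (UNIV :: 'a set)"
    by blast
  then have "w islimpt - {0}"
    using islimpt_insert islimpt_UNIV by metis
  then show ?thesis
    unfolding islimpt_sequential by auto
qed

lemma approximates_trans:
  fixes g :: "'a::topological_space \<Rightarrow> real"
  assumes "approximates M g" and "\<And>f. f \<in> M \<Longrightarrow> approximates M' f"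
  shows "approximates M' g"
  unfolding approximates_def
proof (intro allI impI, elim conjE)
  fix A :: "'a set" and e :: real
  assume "compact A" and "e > 0"
  then obtain f where "f \<in> M" and fg: "\<forall>x\<in>A. \<bar>f x - g x\<bar> < e / 2"
    using assms(1) unfolding approximates_def by (meson half_gt_zero)
  then obtain h where "h \<in> M'" and hf: "\<forall>x\<in>A. \<bar>h x - f x\<bar> < e / 2"
    using assms(2) \<open>compact A\<close> \<open>e > 0\<close> unfolding approximates_def by (meson half_gt_zero)
  have "\<bar>h x - g x\<bar> < e" if "x \<in> A" for x
  proof -
    have "\<bar>h x - f x\<bar> < e / 2" and "\<bar>f x - g x\<bar> < e / 2"
      using fg hf that by auto
    then show ?thesis by linarith
  qed
  with \<open>h \<in> M'\<close> show "\<exists>h\<in>M'. \<forall>x\<in>A. \<bar>h x - g x\<bar> < e"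
    by blast
qed

lemma approximates_uniform_limitI:
  fixes F :: "nat \<Rightarrow> 'a::metric_space \<Rightarrow> real"
  assumes "\<forall>\<^sub>F k in sequentially. F k \<in> M"
    and "\<And>A. compact A \<Longrightarrow> uniform_limit A F f sequentially"
  shows "approximates M f"
  unfolding approximates_def
proof (intro allI impI, elim conjE)
  fix A :: "'a set" and e :: real
  assume "compact A" and "e > 0"
  with assms(2) have "\<forall>\<^sub>F k in sequentially. \<forall>x\<in>A. dist (F k x) (f x) < e"
    by (auto dest: uniform_limitD)
  with assms(1) have "\<forall>\<^sub>F k in sequentially. F k \<in> M \<and> (\<forall>x\<in>A. dist (F k x) (f x) < e)"
    by (rule eventually_conj)
  from eventually_happens'[OF sequentially_bot this]
  show "\<exists>h\<in>M. \<forall>x\<in>A. \<bar>h x - f x\<bar> < e"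
    by (auto simp: dist_real_def)
qed

lemma real_polynomial_function_det_add_scaled_id:
  "real_polynomial_function (\<lambda>t. det (M + t *\<^sub>R mat 1 :: real^'n::finite^'n))"
proof -
  have "real_polynomial_function (\<lambda>t. M $ i $ j + t * mat 1 $ i $ j)" for i j :: 'n
    by (intro real_polynomial_function.intros(3,4)
        real_polynomial_function.intros(2,1) bounded_linear_ident)
  then have entry: "real_polynomial_function (\<lambda>t. (M + t *\<^sub>R mat 1) $ i $ j)" for i j :: 'n
    by simp
  show ?thesis
    unfolding det_def by (intro real_polynomial_function_sum real_polynomial_function.intros(4,2)
        real_polynomial_function_prod entry) simp_all
qed

lemma det_add_scaled_id_nonzero:
  "\<exists>t. det (M + t *\<^sub>R mat 1 :: real^'n::finite^'n) \<noteq> 0"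
proof -
  obtain B where "B > 0" and B: "\<And>x. norm (M *v x) \<le> B * norm x"
    using linear_bounded_pos[OF matrix_vector_mul_linear] by blast
  have "x = 0" if "(M + (B + 1) *\<^sub>R mat 1) *v x = 0" for x
  proof -
    have "M *v x = - ((B + 1) *\<^sub>R x)"
      using that by (simp add: matrix_vector_mult_add_rdistrib scaleR_matrix_vector_assoc[symmetric]
          eq_neg_iff_add_eq_0)
    then have "(B + 1) * norm x \<le> B * norm x"
      using B[of x] \<open>B > 0\<close> by simp
    then have "norm x \<le> 0" by (simp add: algebra_simps)
    then show "x = 0" by simp
  qed
  then have "inj ((*v) (M + (B + 1) *\<^sub>R mat 1))"
    by (simp add: linear_injective_0[OF matrix_vector_mul_linear])
  then show ?thesis
    using det_nz_iff_inj[OF matrix_vector_mul_linear] by (metis matrix_of_matrix_vector_mul)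
qed

lemma eventually_det_add_scaled_id_nonzero:
  "\<forall>\<^sub>F t in at a. det (M + t *\<^sub>R mat 1 :: real^'n::finite^'n) \<noteq> 0"
proof -
  have "finite {t. det (M + t *\<^sub>R mat 1) = 0}"
    using real_polynomial_function_finite_roots[OF real_polynomial_function_det_add_scaled_id]
      det_add_scaled_id_nonzero by metis
  then show ?thesis
    using islimpt_finite islimpt_iff_eventually by fastforce
qed

type_synonym 'n dense_layer = "(real^'n^'n) \<times> (real^'n)"

fun dense_eval :: "(real \<Rightarrow> real) \<Rightarrow> 'n dense_layer list \<Rightarrow> real^'n \<Rightarrow> real^'n::finite"
  where
    "dense_eval act [] h = h"
  | "dense_eval act ((W, b) # L) h = dense_eval act L (\<chi> i. act ((W *v h + b) $ i))"

definition dense_net :: "(real \<Rightarrow> real) \<Rightarrow> 'n dense_layer list \<Rightarrow> real^'n \<Rightarrow> real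
    \<Rightarrow> real^'n::finite \<Rightarrow> real"
  where "dense_net act L w c x = act (w \<bullet> dense_eval act L x + c)"

lemma sum_eq_inner_restrict:
  fixes v h :: "real^'n::finite"
  shows "(\<Sum>j\<in>S. v $ j * h $ j) = (\<chi> j. if j \<in> S then v $ j else 0) \<bullet> h"
  unfolding inner_vec_def by (simp add: sum.inter_restrict[symmetric] if_distrib[of "\<lambda>x. x * _"] cong: if_cong)

lemma net_eval_full_width:
  fixes L :: "'n::finite dense_layer list"
  shows "net_eval act (map (Pair UNIV) L) w c = dense_net act L w c"
proof -
  have "hid_eval act UNIV (map (Pair UNIV) L) h = (UNIV, dense_eval act L h)" for h :: "real^'n"
    by (induction L arbitrary: h) (auto simp: matrix_vector_mult_def)
  then show ?thesis
    by (simp add: fun_eq_iff net_eval_def dense_net_def inner_vec_def)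
qed

lemma hid_eval_eq_dense_eval: "\<exists>T L. \<forall>h. hid_eval act S Ls h = (T, dense_eval act L h)"
proof (induction Ls arbitrary: S)
  case Nil
  show ?case by (metis dense_eval.simps(1) hid_eval.simps(1))
next
  case (Cons layer Ls)
  obtain T W b where layer: "layer = (T, W, b)" by (cases layer)
  obtain T' L where IH: "\<And>h. hid_eval act T Ls h = (T', dense_eval act L h)"
    using Cons.IH by blast
  define W' where "W' = (\<chi> i j. if j \<in> S then W $ i $ j else 0)"
  have "(W' *v h) $ i = (\<Sum>j\<in>S. W $ i $ j * h $ j)" for h i
    by (simp add: W'_def sum_eq_inner_restrict matrix_vector_mult_def inner_vec_def)
  then have "hid_eval act S (layer # Ls) h = (T', dense_eval act ((W', b) # L) h)" for h
    by (simp add: layer IH)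
  then show ?case by blast
qed

lemma net_eval_eq_dense_net: "\<exists>L w'. net_eval act Ls w c = dense_net act L w' c"
proof -
  obtain T L where "\<And>h. hid_eval act UNIV Ls h = (T, dense_eval act L h)"
    using hid_eval_eq_dense_eval by blast
  then have "net_eval act Ls w c = dense_net act L (\<chi> j. if j \<in> T then w $ j else 0) c"
    by (simp add: fun_eq_iff net_eval_def dense_net_def sum_eq_inner_restrict)
  then show ?thesis by blast
qed

lemma dense_net_in_N_star:
  assumes "continuous_on UNIV psi" and "inj psi"
    and "\<forall>(W, b) \<in> set L. det W \<noteq> 0" and "w \<noteq> 0"
  shows "dense_net psi L w c \<in> N_star"
  unfolding N_star_def net_eval_full_width[symmetric]
  using assms by (intro CollectI exI[of _ psi] exI[of _ "map (Pair UNIV) L"] exI[of _ w]) auto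

lemma continuous_on_dense_eval:
  assumes "continuous_on UNIV act"
  shows "continuous_on UNIV (dense_eval act L)"
proof (induction L)
  case Nil
  show ?case by simp
next
  case (Cons layer L)
  obtain W b where layer: "layer = (W, b)" by (cases layer)
  have "continuous_on UNIV (\<lambda>h. \<chi> i. act ((W *v h + b) $ i))"
    by (intro continuous_on_vec_lambda continuous_on_compose2[OF assms] continuous_intros) auto
  with Cons.IH show ?case
    unfolding layer dense_eval.simps by (rule continuous_on_compose2) auto
qed

lemma continuous_on_dense_net:
  assumes "continuous_on UNIV act"
  shows "continuous_on UNIV (dense_net act L w c)"
  unfolding dense_net_def
  by (intro continuous_on_compose2[OF assms] continuous_intros
      continuous_on_dense_eval[OF assms]) auto

definition shift_weights :: "real \<Rightarrow> 'n dense_layer list \<Rightarrow> 'n::finite dense_layer list"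
  where "shift_weights t L = map (\<lambda>(W, b). (W + t *\<^sub>R mat 1, b)) L"

lemma tendsto_dense_eval_shift_weights:
  assumes "uniform_limit UNIV psi act F" and "continuous_on UNIV act"
    and "(d \<longlongrightarrow> 0) F" and "(xs \<longlongrightarrow> x) F"
  shows "((\<lambda>k. dense_eval (psi k) (shift_weights (d k) L) (xs k)) \<longlongrightarrow> dense_eval act L x) F"
  using assms(4)
proof (induction L arbitrary: xs x)
  case Nil
  then show ?case by (simp add: shift_weights_def)
next
  case (Cons layer L)
  obtain W b where layer: "layer = (W, b)" by (cases layer)
  have "((\<lambda>k. (W + d k *\<^sub>R mat 1) *v xs k + b) \<longlongrightarrow> W *v x + 0 *\<^sub>R x + b) F"
    unfolding matrix_vector_mult_add_rdistrib scaleR_matrix_vector_assoc[symmetric]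
      matrix_vector_mul_lid
    by (intro tendsto_intros assms(3) Cons.prems
        bounded_linear.tendsto[OF matrix_vector_mul_bounded_linear])
  then have "((\<lambda>k. \<chi> i. psi k (((W + d k *\<^sub>R mat 1) *v xs k + b) $ i))
      \<longlongrightarrow> (\<chi> i. act ((W *v x + b) $ i))) F"
    by (intro tendsto_vec_lambda tendsto_uniform_limit_apply[OF assms(1)] tendsto_vec_nth
        continuous_on_interior[OF assms(2)]) auto
  then show ?case
    using Cons.IH by (simp add: layer shift_weights_def)
qed

lemma tendsto_dense_net_shift_weights:
  assumes "uniform_limit UNIV psi act F" and "continuous_on UNIV act"
    and "(d \<longlongrightarrow> 0) F" and "(ws \<longlongrightarrow> w) F" and "(xs \<longlongrightarrow> x) F"
  shows "((\<lambda>k. dense_net (psi k) (shift_weights (d k) L) (ws k) c (xs k))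
    \<longlongrightarrow> dense_net act L w c x) F"
  unfolding dense_net_def
  by (intro tendsto_uniform_limit_apply[OF assms(1)] continuous_on_interior[OF assms(2)]
      tendsto_intros assms(4) tendsto_dense_eval_shift_weights[OF assms(1-3,5)]) auto

lemma uniform_limit_dense_net_shift_weights:
  fixes L :: "'n::finite dense_layer list"
  assumes "uniform_limit UNIV psi act sequentially" and "continuous_on UNIV act"
    and "d \<longlonglongrightarrow> 0" and "ws \<longlonglongrightarrow> w" and "compact A"
  shows "uniform_limit A (\<lambda>k. dense_net (psi k) (shift_weights (d k) L) (ws k) c)
    (dense_net act L w c) sequentially"
proof (rule uniform_limit_compact_sequentially[OF assms(5)])
  show "continuous_on A (dense_net act L w c)"
    using continuous_on_dense_net[OF assms(2)] by (rule continuous_on_subset) simp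
next
  fix r :: "nat \<Rightarrow> nat" and xs :: "nat \<Rightarrow> real^'n" and x
  assume "strict_mono r" and "xs \<longlonglongrightarrow> x"
  have "filterlim r sequentially sequentially"
    using \<open>strict_mono r\<close> by (rule filterlim_subseq)
  then show "(\<lambda>k. dense_net (psi (r k)) (shift_weights (d (r k)) L) (ws (r k)) c (xs k))
      \<longlonglongrightarrow> dense_net act L w c x"
    using assms(1-4) \<open>xs \<longlonglongrightarrow> x\<close>
    by (intro tendsto_dense_net_shift_weights[where act = act])
      (auto intro: filterlim_compose)
qed

lemma approximates_N_star_dense_net:
  fixes L :: "'n::finite dense_layer list"
  assumes "continuous_on UNIV act" and "unif_approx_by_inj act"
  shows "approximates N_star (dense_net act L w c)"
proof -
  obtain s where s: "\<And>k. continuous_on UNIV (s k) \<and> inj (s k)"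
    and s_lim: "uniform_limit UNIV s act sequentially"
    using assms(2) unfolding unif_approx_by_inj_def by blast
  obtain ws where ws: "\<And>k. ws k \<noteq> 0" and "ws \<longlonglongrightarrow> w"
    using ex_nonzero_sequence_tendsto by blast
  define d where "d k = inverse (real (Suc k))" for k
  have d: "filterlim d (at 0) sequentially"
    unfolding d_def filterlim_at using LIMSEQ_inverse_real_of_nat by simp
  show ?thesis
  proof (rule approximates_uniform_limitI)
    have "\<forall>\<^sub>F k in sequentially. \<forall>(W, b) \<in> set L. det (W + d k *\<^sub>R mat 1) \<noteq> 0"
      by (intro eventually_compose_filterlim[OF _ d] eventually_ball_finite)
        (auto intro: eventually_det_add_scaled_id_nonzero)
    then show "\<forall>\<^sub>F k in sequentially. dense_net (s k) (shift_weights (d k) L) (ws k) c \<in> N_star"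
      by eventually_elim (use s ws in \<open>auto intro!: dense_net_in_N_star simp: shift_weights_def\<close>)
  next
    fix A :: "(real^'n) set"
    assume "compact A"
    with d \<open>ws \<longlonglongrightarrow> w\<close> show "uniform_limit A (\<lambda>k. dense_net (s k) (shift_weights (d k) L) (ws k) c)
        (dense_net act L w c) sequentially"
      by (intro uniform_limit_dense_net_shift_weights[OF s_lim assms(1)]) (auto simp: filterlim_at)
  qed
qed

theorem lemma1:
  fixes act :: "real \<Rightarrow> real" and g :: "real^'n \<Rightarrow> real"
  assumes "continuous_on UNIV act"
    and "unif_approx_by_inj act"
    and "approximates (N_fam act) g"
  shows "approximates N_star g"
proof (rule approximates_trans[OF assms(3)])
  fix f
  assume "f \<in> N_fam act"
  then obtain L w c where "f = dense_net act L w c"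
    unfolding N_fam_def using net_eval_eq_dense_net by blast
  then show "approximates N_star f"
    using approximates_N_star_dense_net[OF assms(1,2)] by simp
qed

end
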